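(* Let $H\in M_{M\times N}(\mathbb T)$ be a partial Hadamard matrix with rows $R_1,\ldots,R_M\in\mathbb T^N$. Then there is a unique unital $*$-representation $\pi_H:\widetilde A_s(M)\to M_N(\mathbb C)$ with $\pi_H(u_{ij})=\mathrm{Proj}(R_i/R_j)$ for all $i,j$.
   Context: $\mathbb T$ is the unit circle. A partial Hadamard matrix is a matrix $H\in M_{M\times N}(\mathbb T)$ whose rows are pairwise orthogonal in $\mathbb C^N$. $R_i/R_j\in\mathbb T^N$ denotes entrywise division, and $\mathrm{Proj}(\xi)$ denotes the orthogonal projection onto $\mathbb C\xi$. A submagic matrix over a unital $C^*$-algebra is a square matrix whose entries are orthogonal projections, pairwise orthogonal within each row and within each column; $\widetilde A_s(M)$ is the universal unital $C^*$-algebra generated by the entries $u_{ij}$ of an $M\times M$ submagic matrix. *)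

theory Defs
  imports "HOL-Analysis.Analysis" "HOL-Library.Poly_Mapping"
begin

definition partial_hadamard :: "complex^'n^'m \<Rightarrow> bool" where
  "partial_hadamard H \<longleftrightarrow>
     (\<forall>i j. cmod (H$i$j) = 1) \<and>
     (\<forall>i k. i \<noteq> k \<longrightarrow> (\<Sum>j\<in>UNIV. H$i$j * cnj (H$k$j)) = 0)"

definition row_div :: "complex^'n \<Rightarrow> complex^'n \<Rightarrow> complex^'n" where
  "row_div x y = (\<chi> k. x$k / y$k)"

text \<open>Orthogonal projection onto the line C xi (zero if xi = 0).\<close>
definition Proj :: "complex^'n \<Rightarrow> complex^'n^'n" where
  "Proj \<xi> = (\<chi> a b. \<xi>$a * cnj (\<xi>$b) / complex_of_real ((norm \<xi>)\<^sup>2))"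

definition mat_adj :: "complex^'n^'n \<Rightarrow> complex^'n^'n" where
  "mat_adj A = (\<chi> i j. cnj (A$j$i))"

definition mat_scale :: "complex \<Rightarrow> complex^'n^'n \<Rightarrow> complex^'n^'n" where
  "mat_scale c A = (\<chi> i j. c * A$i$j)"

text \<open>A letter (i,j,False) stands for u_ij, (i,j,True) for its adjoint u_ij^*.
  Noncommutative polynomials: finitely supported complex functions on words.\<close>

type_synonym 'm ncpoly = "('m \<times> 'm \<times> bool) list \<Rightarrow>\<^sub>0 complex"

definition nc_mult :: "'m ncpoly \<Rightarrow> 'm ncpoly \<Rightarrow> 'm ncpoly" where
  "nc_mult p q = (\<Sum>u\<in>Poly_Mapping.keys p. \<Sum>v\<in>Poly_Mapping.keys q.
      Poly_Mapping.single (u @ v) (Poly_Mapping.lookup p u * Poly_Mapping.lookup q v))"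

definition nc_smult :: "complex \<Rightarrow> 'm ncpoly \<Rightarrow> 'm ncpoly" where
  "nc_smult c p = Poly_Mapping.map (\<lambda>x. c * x) p"

definition nc_one :: "'m ncpoly" where
  "nc_one = Poly_Mapping.single [] 1"

definition letter_star :: "'m \<times> 'm \<times> bool \<Rightarrow> 'm \<times> 'm \<times> bool" where
  "letter_star l = (case l of (i, j, b) \<Rightarrow> (i, j, \<not> b))"

definition nc_star :: "'m ncpoly \<Rightarrow> 'm ncpoly" where
  "nc_star p = (\<Sum>u\<in>Poly_Mapping.keys p.
      Poly_Mapping.single (map letter_star (rev u)) (cnj (Poly_Mapping.lookup p u)))"

definition nc_gen :: "'m \<Rightarrow> 'm \<Rightarrow> 'm ncpoly" where
  "nc_gen i j = Poly_Mapping.single [(i, j, False)] 1"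

definition submagic_rels :: "'m ncpoly set" where
  "submagic_rels =
     {nc_gen i j - nc_star (nc_gen i j) | i j. True} \<union>
     {nc_mult (nc_gen i j) (nc_gen i j) - nc_gen i j | i j. True} \<union>
     {nc_mult (nc_gen i j) (nc_gen i k) | i j k. j \<noteq> k} \<union>
     {nc_mult (nc_gen i j) (nc_gen k j) | i j k. i \<noteq> k}"

text \<open>A unital *-representation of the submagic algebra A_s(M) into M_N(C),
  given by its lift to the free *-algebra: a unital *-homomorphism killing the
  defining relations (equivalently, killing the ideal they generate).\<close>

definition submagic_rep :: "('m ncpoly \<Rightarrow> complex^'n^'n) \<Rightarrow> bool" where
  "submagic_rep \<pi> \<longleftrightarrow>
     (\<forall>p q. \<pi> (p + q) = \<pi> p + \<pi> q) \<and>
     (\<forall>c p. \<pi> (nc_smult c p) = mat_scale c (\<pi> p)) \<and>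
     (\<forall>p q. \<pi> (nc_mult p q) = \<pi> p ** \<pi> q) \<and>
     \<pi> nc_one = mat 1 \<and>
     (\<forall>p. \<pi> (nc_star p) = mat_adj (\<pi> p)) \<and>
     (\<forall>r\<in>submagic_rels. \<pi> r = 0)"

end

theory Submission
  imports Defs
begin

text \<open>Any assignment u_ij \<mapsto> P_ij of matrices extends uniquely to a unital
  *-homomorphism on the free *-algebra (expand into monomials and multiply out), and
  this homomorphism kills the submagic relations as soon as the P_ij are projections
  that are orthogonal along rows and along columns. For a partial Hadamard matrix the
  vectors R_i/R_j have unimodular entries, hence are nonzero, so Proj (R_i/R_j) is a
  projection; and since |H_ic| = 1, the inner product of R_i/R_j with R_i/R_k equals
  that of R_j with R_k, while that of R_i/R_j with R_k/R_j equals that of R_k with R_i,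
  so the orthogonality of the rows of H is exactly what is needed.\<close>

lemma mat_scale_0 [simp]: "mat_scale 0 A = 0"
  by (simp add: mat_scale_def vec_eq_iff)

lemma mat_scale_1 [simp]: "mat_scale 1 A = A"
  by (simp add: mat_scale_def vec_eq_iff)

lemma mat_scale_add_left: "mat_scale (a + b) A = mat_scale a A + mat_scale b A"
  by (simp add: mat_scale_def vec_eq_iff algebra_simps)

lemma mat_scale_mat_scale: "mat_scale a (mat_scale b A) = mat_scale (a * b) A"
  by (simp add: mat_scale_def vec_eq_iff mult.assoc)

lemma mat_scale_sum: "mat_scale c (\<Sum>x\<in>S. f x) = (\<Sum>x\<in>S. mat_scale c (f x))"
  by (induction S rule: infinite_finite_induct) (auto simp: mat_scale_def vec_eq_iff algebra_simps)

lemma matrix_mul_mat_scale_left: "mat_scale c A ** B = mat_scale c (A ** B)"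
  by (simp add: mat_scale_def matrix_matrix_mult_def vec_eq_iff sum_distrib_left mult.assoc)

lemma matrix_mul_mat_scale_right: "A ** mat_scale c B = mat_scale c (A ** B)"
  by (simp add: mat_scale_def matrix_matrix_mult_def vec_eq_iff sum_distrib_left mult.left_commute)

lemma mat_adj_add: "mat_adj (A + B) = mat_adj A + mat_adj B"
  by (simp add: mat_adj_def vec_eq_iff)

lemma mat_adj_sum: "mat_adj (\<Sum>x\<in>S. f x) = (\<Sum>x\<in>S. mat_adj (f x))"
  by (induction S rule: infinite_finite_induct) (auto simp: mat_adj_add mat_adj_def vec_eq_iff)

lemma mat_adj_mat_scale: "mat_adj (mat_scale c A) = mat_scale (cnj c) (mat_adj A)"
  by (simp add: mat_adj_def mat_scale_def vec_eq_iff)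

lemma mat_adj_matrix_mul: "mat_adj (A ** B) = mat_adj B ** mat_adj A"
  by (simp add: mat_adj_def matrix_matrix_mult_def vec_eq_iff mult.commute)

lemma mat_adj_mat_1 [simp]: "mat_adj (mat 1) = mat 1"
  by (simp add: mat_adj_def mat_def vec_eq_iff)

lemma matrix_add_rdistrib: "(B + C) ** A = B ** A + C ** A"
  by (vector matrix_matrix_mult_def sum.distrib[symmetric] field_simps)

lemma matrix_mul_sum_left:
  "(\<Sum>x\<in>S. f x) ** (A :: 'a::comm_ring_1^'p^'n) = (\<Sum>x\<in>S. f x ** A)"
  by (induction S rule: infinite_finite_induct) (auto simp: matrix_add_rdistrib)

lemma matrix_mul_sum_right:
  "(A :: 'a::comm_ring_1^'n^'m) ** (\<Sum>x\<in>S. f x) = (\<Sum>x\<in>S. A ** f x)"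
  by (induction S rule: infinite_finite_induct) (auto simp: matrix_add_ldistrib)

definition nc_lin_ext ::
    "('a list \<Rightarrow> complex^'n^'n) \<Rightarrow> ('a list \<Rightarrow>\<^sub>0 complex) \<Rightarrow> complex^'n^'n" where
  "nc_lin_ext f p = (\<Sum>u\<in>Poly_Mapping.keys p. mat_scale (Poly_Mapping.lookup p u) (f u))"

lemma nc_lin_ext_single [simp]: "nc_lin_ext f (Poly_Mapping.single w c) = mat_scale c (f w)"
  by (simp add: nc_lin_ext_def)

lemma nc_lin_ext_add: "nc_lin_ext f (p + q) = nc_lin_ext f p + nc_lin_ext f q"
  unfolding nc_lin_ext_def
  by (rule setsum_keys_plus_distrib) (simp_all add: mat_scale_add_left)

lemma nc_lin_ext_zero [simp]: "nc_lin_ext f 0 = 0"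
  by (simp add: nc_lin_ext_def)

lemma nc_lin_ext_sum: "nc_lin_ext f (\<Sum>x\<in>A. g x) = (\<Sum>x\<in>A. nc_lin_ext f (g x))"
  by (induction A rule: infinite_finite_induct) (auto simp: nc_lin_ext_add)

lemma poly_mapping_sum_single:
  "p = (\<Sum>u\<in>Poly_Mapping.keys p. Poly_Mapping.single u (Poly_Mapping.lookup p u))"
  by (rule poly_mapping_eqI) (simp add: lookup_sum lookup_single when_def in_keys_iff)

lemma nc_lin_ext_smult: "nc_lin_ext f (nc_smult c p) = mat_scale c (nc_lin_ext f p)"
proof -
  have "nc_smult c p =
      (\<Sum>u\<in>Poly_Mapping.keys p. Poly_Mapping.single u (c * Poly_Mapping.lookup p u))"
    unfolding nc_smult_def
    by (rule poly_mapping_eqI)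
      (simp add: lookup_sum lookup_single when_def in_keys_iff Poly_Mapping.map.rep_eq)
  then show ?thesis
    by (simp only: nc_lin_ext_sum nc_lin_ext_single)
      (simp add: nc_lin_ext_def mat_scale_sum mat_scale_mat_scale)
qed

fun word_prod :: "('l \<Rightarrow> complex^'n^'n) \<Rightarrow> 'l list \<Rightarrow> complex^'n^'n" where
  "word_prod L [] = mat 1"
| "word_prod L (l # u) = L l ** word_prod L u"

lemma word_prod_append: "word_prod L (u @ v) = word_prod L u ** word_prod L v"
  by (induction u) (auto simp: matrix_mul_assoc)

lemma word_prod_star:
  assumes "\<And>l. L (letter_star l) = mat_adj (L l)"
  shows "word_prod L (map letter_star (rev u)) = mat_adj (word_prod L u)"
  by (induction u) (auto simp: word_prod_append assms mat_adj_matrix_mul)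

lemma nc_lin_ext_word_prod_mult:
  "nc_lin_ext (word_prod L) (nc_mult p q) =
     nc_lin_ext (word_prod L) p ** nc_lin_ext (word_prod L) q"
proof -
  have "nc_lin_ext (word_prod L) (nc_mult p q) =
      (\<Sum>u\<in>Poly_Mapping.keys p. \<Sum>v\<in>Poly_Mapping.keys q.
         mat_scale (Poly_Mapping.lookup p u * Poly_Mapping.lookup q v)
           (word_prod L u ** word_prod L v))"
    by (simp add: nc_mult_def nc_lin_ext_sum word_prod_append)
  also have "\<dots> = nc_lin_ext (word_prod L) p ** nc_lin_ext (word_prod L) q"
    by (simp only: nc_lin_ext_def matrix_mul_sum_left, simp only: matrix_mul_sum_right
        matrix_mul_mat_scale_left matrix_mul_mat_scale_right mat_scale_mat_scale)
      (simp add: mult.commute)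
  finally show ?thesis .
qed

lemma nc_lin_ext_word_prod_star:
  assumes "\<And>l. L (letter_star l) = mat_adj (L l)"
  shows "nc_lin_ext (word_prod L) (nc_star p) = mat_adj (nc_lin_ext (word_prod L) p)"
  unfolding nc_star_def nc_lin_ext_sum nc_lin_ext_single word_prod_star[of L, OF assms]
  by (simp add: nc_lin_ext_def mat_adj_sum mat_adj_mat_scale)

definition letter_mat :: "('m \<Rightarrow> 'm \<Rightarrow> complex^'n^'n) \<Rightarrow> 'm \<times> 'm \<times> bool \<Rightarrow> complex^'n^'n" where
  "letter_mat P l = (case l of (i, j, b) \<Rightarrow> if b then mat_adj (P i j) else P i j)"

lemma letter_mat_star: "letter_mat P (letter_star l) = mat_adj (letter_mat P l)"
  by (cases l) (auto simp: letter_mat_def letter_star_def mat_adj_def vec_eq_iff)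

definition nc_eval :: "('m \<Rightarrow> 'm \<Rightarrow> complex^'n^'n) \<Rightarrow> 'm ncpoly \<Rightarrow> complex^'n^'n" where
  "nc_eval P = nc_lin_ext (word_prod (letter_mat P))"

lemma nc_eval_add: "nc_eval P (p + q) = nc_eval P p + nc_eval P q"
  by (simp add: nc_eval_def nc_lin_ext_add)

lemma nc_eval_diff: "nc_eval P (p - q) = nc_eval P p - nc_eval P q"
  using nc_eval_add[of P "p - q" q] by simp

lemma nc_eval_smult: "nc_eval P (nc_smult c p) = mat_scale c (nc_eval P p)"
  by (simp add: nc_eval_def nc_lin_ext_smult)

lemma nc_eval_mult: "nc_eval P (nc_mult p q) = nc_eval P p ** nc_eval P q"
  by (simp add: nc_eval_def nc_lin_ext_word_prod_mult)

lemma nc_eval_one: "nc_eval P nc_one = mat 1"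
  by (simp add: nc_eval_def nc_one_def)

lemma nc_eval_star: "nc_eval P (nc_star p) = mat_adj (nc_eval P p)"
  by (simp add: nc_eval_def nc_lin_ext_word_prod_star letter_mat_star)

lemma nc_eval_gen: "nc_eval P (nc_gen i j) = P i j"
  by (simp add: nc_eval_def nc_gen_def letter_mat_def)

lemma nc_eval_unique:
  fixes \<pi> :: "'m ncpoly \<Rightarrow> complex^'n^'n"
  assumes add: "\<And>p q. \<pi> (p + q) = \<pi> p + \<pi> q"
    and smult: "\<And>c p. \<pi> (nc_smult c p) = mat_scale c (\<pi> p)"
    and mult: "\<And>p q. \<pi> (nc_mult p q) = \<pi> p ** \<pi> q"
    and one: "\<pi> nc_one = mat 1"
    and star: "\<And>p. \<pi> (nc_star p) = mat_adj (\<pi> p)"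
    and gen: "\<And>i j. \<pi> (nc_gen i j) = P i j"
  shows "\<pi> = nc_eval P"
proof
  fix p :: "'m ncpoly"
  have sum: "\<pi> (\<Sum>x\<in>A. g x) = (\<Sum>x\<in>A. \<pi> (g x))" for A and g :: "_ \<Rightarrow> 'm ncpoly"
    by (induction A rule: infinite_finite_induct) (auto simp: add[of 0 0, simplified] add)
  have letter: "\<pi> (Poly_Mapping.single [l] 1) = letter_mat P l" for l
  proof -
    obtain i j b where l: "l = (i, j, b)" by (cases l)
    have "\<pi> (Poly_Mapping.single [(i, j, True)] 1) = mat_adj (P i j)"
      using star[of "nc_gen i j"] gen[of i j]
      by (simp add: nc_star_def nc_gen_def letter_star_def)
    then show ?thesis
      using gen[of i j] by (cases b) (simp_all add: l letter_mat_def nc_gen_def)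
  qed
  have word: "\<pi> (Poly_Mapping.single w 1) = word_prod (letter_mat P) w" for w
  proof (induction w)
    case Nil
    then show ?case using one by (simp add: nc_one_def)
  next
    case (Cons l w)
    have "Poly_Mapping.single (l # w) (1::complex) =
        nc_mult (Poly_Mapping.single [l] 1) (Poly_Mapping.single w 1)"
      by (simp add: nc_mult_def)
    then show ?case using Cons mult letter by simp
  qed
  have monomial: "\<pi> (Poly_Mapping.single w c) = mat_scale c (word_prod (letter_mat P) w)" for w c
    using smult[of c "Poly_Mapping.single w 1"] word by (simp add: nc_smult_def)
  have "\<pi> p = \<pi> (\<Sum>u\<in>Poly_Mapping.keys p. Poly_Mapping.single u (Poly_Mapping.lookup p u))"
    by (subst poly_mapping_sum_single) (rule refl)
  then show "\<pi> p = nc_eval P p"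
    by (simp add: sum monomial nc_eval_def nc_lin_ext_def)
qed

definition submagic_matrix :: "('m \<Rightarrow> 'm \<Rightarrow> complex^'n^'n) \<Rightarrow> bool" where
  "submagic_matrix P \<longleftrightarrow>
     (\<forall>i j. mat_adj (P i j) = P i j \<and> P i j ** P i j = P i j) \<and>
     (\<forall>i j k. j \<noteq> k \<longrightarrow> P i j ** P i k = 0) \<and>
     (\<forall>i j k. i \<noteq> k \<longrightarrow> P i j ** P k j = 0)"

lemma submagic_rep_nc_eval:
  assumes "submagic_matrix P"
  shows "submagic_rep (nc_eval P)"
proof -
  have "\<forall>r\<in>submagic_rels. nc_eval P r = 0"
    using assms
    by (auto simp: submagic_rels_def submagic_matrix_def nc_eval_diff nc_eval_mult
        nc_eval_star nc_eval_gen)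
  then show ?thesis
    by (simp add: submagic_rep_def nc_eval_add nc_eval_smult nc_eval_mult nc_eval_one
        nc_eval_star)
qed

lemma Proj_adj: "mat_adj (Proj \<xi>) = Proj \<xi>"
  by (simp add: mat_adj_def Proj_def vec_eq_iff mult.commute)

lemma Proj_mult_Proj:
  "Proj \<xi> ** Proj \<eta> = (\<chi> a b. \<xi>$a * cnj (\<eta>$b) * (\<Sum>c\<in>UNIV. cnj (\<xi>$c) * \<eta>$c) /
      (complex_of_real ((norm \<xi>)\<^sup>2) * complex_of_real ((norm \<eta>)\<^sup>2)))"
  by (simp add: Proj_def matrix_matrix_mult_def vec_eq_iff sum_divide_distrib
      sum_distrib_left mult_ac)

lemma sum_cnj_mult_self: "(\<Sum>c\<in>UNIV. cnj (\<xi>$c) * \<xi>$c) = complex_of_real ((norm \<xi>)\<^sup>2)"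
proof -
  have "(norm \<xi>)\<^sup>2 = (\<Sum>c\<in>UNIV. (cmod (\<xi>$c))\<^sup>2)"
    by (simp add: norm_vec_def L2_set_def sum_nonneg)
  then show ?thesis
    by (simp add: complex_norm_square[symmetric] mult.commute)
qed

lemma Proj_idem:
  assumes "\<xi> \<noteq> 0"
  shows "Proj \<xi> ** Proj \<xi> = Proj \<xi>"
proof -
  have "norm \<xi> \<noteq> 0"
    using assms by simp
  then show ?thesis
    unfolding Proj_mult_Proj sum_cnj_mult_self by (simp add: Proj_def vec_eq_iff field_simps)
qed

lemma Proj_mult_Proj_orthogonal:
  assumes "(\<Sum>c\<in>UNIV. cnj (\<xi>$c) * \<eta>$c) = 0"
  shows "Proj \<xi> ** Proj \<eta> = 0"
  by (simp add: Proj_mult_Proj assms vec_eq_iff)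

lemma cnj_mult_self_unimodular: "cmod z = 1 \<Longrightarrow> cnj z * z = 1"
  by (metis complex_norm_square mult.commute of_real_1 power_one)

lemma row_div_unimodular:
  assumes "\<And>c. cmod (y$c) = 1"
  shows "row_div x y = (\<chi> c. x$c * cnj (y$c))"
  using cnj_mult_self_unimodular[OF assms]
  by (simp add: row_div_def vec_eq_iff divide_complex_def)
    (metis inverse_unique mult.commute)

lemma submagic_matrix_partial_hadamard:
  fixes H :: "complex^'n^'m"
  assumes "partial_hadamard H"
  shows "submagic_matrix (\<lambda>i j. Proj (row_div (H$i) (H$j)))"
proof -
  have unit: "cnj (H$i$c) * H$i$c = 1" for i c
    using assms by (simp add: partial_hadamard_def cnj_mult_self_unimodular)
  have orth: "(\<Sum>c\<in>UNIV. H$i$c * cnj (H$k$c)) = 0" if "i \<noteq> k" for i k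
    using assms that by (simp add: partial_hadamard_def)
  have R: "row_div (H$i) (H$j) = (\<chi> c. H$i$c * cnj (H$j$c))" for i j
    using assms by (simp add: partial_hadamard_def row_div_unimodular)
  have "row_div (H$i) (H$j) $ c \<noteq> 0" for i j c
    using unit[of i c] unit[of j c] by (auto simp: R)
  then have "row_div (H$i) (H$j) \<noteq> 0" for i j
    by (metis zero_index)
  moreover have "(\<Sum>c\<in>UNIV. cnj (row_div (H$i) (H$j) $ c) * row_div (H$i) (H$k) $ c) = 0"
    if "j \<noteq> k" for i j k
  proof -
    have "(\<Sum>c\<in>UNIV. cnj (row_div (H$i) (H$j) $ c) * row_div (H$i) (H$k) $ c) =
        (\<Sum>c\<in>UNIV. (cnj (H$i$c) * H$i$c) * (H$j$c * cnj (H$k$c)))"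
      by (simp add: R mult_ac)
    then show ?thesis
      using orth[OF that] by (simp add: unit)
  qed
  moreover have "(\<Sum>c\<in>UNIV. cnj (row_div (H$i) (H$j) $ c) * row_div (H$k) (H$j) $ c) = 0"
    if "i \<noteq> k" for i j k
  proof -
    have "(\<Sum>c\<in>UNIV. cnj (row_div (H$i) (H$j) $ c) * row_div (H$k) (H$j) $ c) =
        cnj (\<Sum>c\<in>UNIV. (cnj (H$j$c) * H$j$c) * (H$i$c * cnj (H$k$c)))"
      unfolding cnj_sum by (simp add: R mult_ac)
    then show ?thesis
      using orth[OF that] by (simp add: unit)
  qed
  ultimately show ?thesis
    by (simp add: submagic_matrix_def Proj_adj Proj_idem Proj_mult_Proj_orthogonal)
qed

theorem proposition2p1:
  fixes H :: "complex^'n^'m"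
  assumes "partial_hadamard H"
  shows "\<exists>!\<pi> :: 'm ncpoly \<Rightarrow> complex^'n^'n.
           submagic_rep \<pi> \<and> (\<forall>i j. \<pi> (nc_gen i j) = Proj (row_div (H$i) (H$j)))"
proof (rule ex1I)
  let ?P = "\<lambda>i j. Proj (row_div (H$i) (H$j))"
  show "submagic_rep (nc_eval ?P) \<and> (\<forall>i j. nc_eval ?P (nc_gen i j) = ?P i j)"
    using submagic_rep_nc_eval[OF submagic_matrix_partial_hadamard[OF assms]]
    by (simp add: nc_eval_gen)
  fix \<pi> :: "'m ncpoly \<Rightarrow> complex^'n^'n"
  assume "submagic_rep \<pi> \<and> (\<forall>i j. \<pi> (nc_gen i j) = ?P i j)"
  then show "\<pi> = nc_eval ?P"
    by (intro nc_eval_unique) (auto simp: submagic_rep_def)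
qed

end
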